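(* Let $D\subset\mathbb{R}^n$ be a domain containing the origin, let $f:D\to\mathbb{R}^n$ be continuously differentiable with $f(0)=0$, and consider $\dot x=f(x)$. Let $\rho:D\to\mathbb{R}$ be a continuously differentiable function such that $\rho(0)=0$ and $\rho(x_0)>0$ for some $x_0$ with arbitrarily small $\|x_0\|$. Let $B=\{x\in\mathbb{R}^n:\|x\|\le r\}$ with $r>0$ such that $B\subseteq D$, and let $U=\{x\in B:\rho(x)>0\}$; write $\rho^{-1}(x)=1/\rho(x)$ on $U$. The equilibrium $x=0$ is unstable if at least one of the following conditions holds for every $x\in U$: 1) $\mathrm{div}\{\rho(x)f(x)\}>\rho(x)\,\mathrm{div}\{f(x)\}$; 2) $\mathrm{div}\{\rho^{-1}(x)f(x)\}<0$ and $\mathrm{div}\{f(x)\}\ge0$; 3) $\mathrm{div}\{\rho(x)f(x)\}>\beta(x)\rho^2(x)\,\mathrm{div}\{\rho^{-1}(x)f(x)\}$, where either $\beta(x)>1$ and $\mathrm{div}\{f(x)\}\ge0$, or $\beta(x)=1$; 4) $\mathrm{div}\{\rho(x)f(x)\}>0$ and $\mathrm{div}\{\rho^{-1}(x)f(x)\}<0$.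
   Context: $\mathrm{div}\{h(x)\}=\sum_i\partial h_i/\partial x_i$; $\|\cdot\|$ is the Euclidean norm. Instability is in the sense of Lyapunov. *)

theory Defs
  imports "HOL-Analysis.Analysis"
begin

definition C1_on :: "('a::real_normed_vector \<Rightarrow> 'b::real_normed_vector) \<Rightarrow> 'a set \<Rightarrow> bool" where
  "C1_on g S \<longleftrightarrow> (\<exists>g'. continuous_on S g' \<and> (\<forall>x\<in>S. (g has_derivative blinfun_apply (g' x)) (at x)))"

definition divergence :: "(real^'n \<Rightarrow> real^'n) \<Rightarrow> real^'n \<Rightarrow> real" where
  "divergence h x = (\<Sum>i\<in>UNIV. (frechet_derivative h (at x) (axis i 1)) $ i)"

definition is_solution :: "(real^'n \<Rightarrow> real^'n) \<Rightarrow> (real^'n) set \<Rightarrow> (real \<Rightarrow> real^'n) \<Rightarrow> real \<Rightarrow> bool" where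
  "is_solution f D x T \<longleftrightarrow> T \<ge> 0 \<and>
     (\<forall>t\<in>{0..T}. x t \<in> D \<and> (x has_vector_derivative f (x t)) (at t within {0..T}))"

definition lyapunov_stable_origin :: "(real^'n \<Rightarrow> real^'n) \<Rightarrow> (real^'n) set \<Rightarrow> bool" where
  "lyapunov_stable_origin f D \<longleftrightarrow>
     (\<forall>\<epsilon>>0. \<exists>\<delta>>0. \<forall>x T. is_solution f D x T \<and> norm (x 0) < \<delta> \<longrightarrow>
        (\<forall>t\<in>{0..T}. norm (x t) < \<epsilon>))"

definition lyapunov_unstable_origin :: "(real^'n \<Rightarrow> real^'n) \<Rightarrow> (real^'n) set \<Rightarrow> bool" where
  "lyapunov_unstable_origin f D \<longleftrightarrow> \<not> lyapunov_stable_origin f D"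

end

theory Submission
  imports Defs
begin

text \<open>Each of the four divergence conditions forces the derivative \<open>\<rho>'(x) (f x)\<close> of \<open>\<rho>\<close>
along the flow to be positive wherever \<open>\<rho> > 0\<close> in the ball \<open>B\<close>, because
\<open>div (\<rho> f) = \<rho> div f + \<rho>'(f)\<close> and \<open>div (\<rho>\<^sup>-\<^sup>1 f) = \<rho>\<^sup>-\<^sup>1 div f - \<rho>\<^sup>-\<^sup>2 \<rho>'(f)\<close>.
Instability then follows as in Chetaev's theorem: start a solution at a point \<open>x0\<close>
arbitrarily close to 0 with \<open>\<rho> x0 = a > 0\<close>. While the solution stays in \<open>B\<close>, \<open>\<rho>\<close> cannot
drop below \<open>a\<close>, and on the compact set \<open>{x \<in> B. a \<le> \<rho> x}\<close> the derivative \<open>\<rho>'(f)\<close> is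
bounded below by some \<open>\<gamma> > 0\<close>; so \<open>\<rho>\<close> grows at least linearly and would exceed its maximum
on \<open>B\<close>. Hence the solution reaches the sphere \<open>norm x = r\<close>. Solutions exist by Picard
iteration for \<open>f \<circ> closest_point B\<close>, a globally Lipschitz function agreeing with \<open>f\<close> on \<open>B\<close>.\<close>

lemma has_integral_exp_mult:
  fixes k u :: real
  assumes "k \<noteq> 0" and "0 \<le> u"
  shows "((\<lambda>s. exp (k * s)) has_integral (exp (k * u) - 1) / k) {0..u}"
proof -
  have "((\<lambda>s. exp (k * s)) has_integral (exp (k * u) / k - exp (k * 0) / k)) {0..u}"
  proof (rule fundamental_theorem_of_calculus[OF \<open>0 \<le> u\<close>])
    fix s assume "s \<in> {0..u}"
    have "((\<lambda>s. exp (k * s) / k) has_real_derivative exp (k * s) * k / k) (at s within {0..u})"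
      by (intro derivative_eq_intros) (use \<open>k \<noteq> 0\<close> in auto)
    then show "((\<lambda>s. exp (k * s) / k) has_vector_derivative exp (k * s)) (at s within {0..u})"
      using \<open>k \<noteq> 0\<close> by (simp add: has_real_derivative_iff_has_vector_derivative)
  qed
  then show ?thesis by (simp add: diff_divide_distrib)
qed

lemma exp_weighted_lipschitz_integral_bound:
  fixes F :: "'a::euclidean_space \<Rightarrow> 'a"
  assumes lip: "L-lipschitz_on UNIV F" and L: "0 < L" and u: "0 \<le> u"
    and w1: "continuous_on {0..u} w1" and w2: "continuous_on {0..u} w2"
    and d: "\<And>s. s \<in> {0..u} \<Longrightarrow> norm (w1 s - w2 s) \<le> d"
  shows "exp (- (2 * L * u)) * norm (integral {0..u}
           (\<lambda>s. F (exp (2 * L * s) *\<^sub>R w1 s) - F (exp (2 * L * s) *\<^sub>R w2 s))) \<le> d / 2"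
proof -
  define k where "k = 2 * L"
  have "0 \<le> d" by (rule order_trans[OF norm_ge_zero d[of 0]]) (use u in simp)
  have contF: "continuous_on UNIV F" using lip by (rule lipschitz_on_continuous_on)
  have integrable: "(\<lambda>s. F (exp (k * s) *\<^sub>R w s)) integrable_on {0..u}"
    if "continuous_on {0..u} w" for w
    by (intro integrable_continuous_real continuous_on_compose2[OF contF] continuous_intros that)
      auto
  have bound: "norm (F (exp (k * s) *\<^sub>R w1 s) - F (exp (k * s) *\<^sub>R w2 s)) \<le> L * d * exp (k * s)"
    if s: "s \<in> {0..u}" for s
  proof -
    have "norm (F (exp (k * s) *\<^sub>R w1 s) - F (exp (k * s) *\<^sub>R w2 s))
        \<le> L * norm (exp (k * s) *\<^sub>R w1 s - exp (k * s) *\<^sub>R w2 s)"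
      using lipschitz_on_normD[OF lip] by simp
    also have "\<dots> = L * exp (k * s) * norm (w1 s - w2 s)"
      by (simp flip: scaleR_diff_right)
    also have "\<dots> \<le> L * exp (k * s) * d"
      using d[OF s] L by simp
    finally show ?thesis by (simp add: mult_ac)
  qed
  have exp_integral: "((\<lambda>s. L * d * exp (k * s)) has_integral L * d * ((exp (k * u) - 1) / k)) {0..u}"
    using L u by (intro has_integral_mult_right has_integral_exp_mult) (simp_all add: k_def)
  have "norm (integral {0..u} (\<lambda>s. F (exp (k * s) *\<^sub>R w1 s) - F (exp (k * s) *\<^sub>R w2 s)))
      \<le> integral {0..u} (\<lambda>s. L * d * exp (k * s))"
    using bound exp_integral integrable[OF w1] integrable[OF w2]
    by (intro integral_norm_bound_integral) (auto intro: integrable_diff)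
  also have "\<dots> = L * d * ((exp (k * u) - 1) / k)"
    using exp_integral by (rule integral_unique)
  finally have "exp (- (k * u)) * norm (integral {0..u}
        (\<lambda>s. F (exp (k * s) *\<^sub>R w1 s) - F (exp (k * s) *\<^sub>R w2 s)))
      \<le> exp (- (k * u)) * (L * d * ((exp (k * u) - 1) / k))"
    by (rule mult_left_mono) simp
  also have "\<dots> = d / 2 * (1 - exp (- (k * u)))"
    using L by (simp add: k_def field_simps exp_minus)
  also have "\<dots> \<le> d / 2"
    using \<open>0 \<le> d\<close> by (simp add: mult_left_le)
  finally show ?thesis by (simp add: k_def)
qed

lemma lipschitz_integral_equation_solvable:
  fixes F :: "'a::euclidean_space \<Rightarrow> 'a" and T :: real
  assumes lip: "L-lipschitz_on UNIV F" and L: "0 < L" and T: "0 \<le> T"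
  shows "\<exists>x. continuous_on {0..T} x \<and> (\<forall>t\<in>{0..T}. x t = x0 + integral {0..t} (\<lambda>s. F (x s)))"
proof -
  have contF: "continuous_on UNIV F" using lip by (rule lipschitz_on_continuous_on)
  \<comment> \<open>The Picard operator acting on \<open>w t = exp (-2Lt) x t\<close>: this weight makes it a
      contraction with constant 1/2 on the whole interval.\<close>
  define G where "G w u = exp (- (2 * L * u)) *\<^sub>R
      (x0 + integral {0..u} (\<lambda>s. F (exp (2 * L * s) *\<^sub>R apply_bcontfun w s)))" for w u
  have "continuous_on {0..T} (G w)" for w
    unfolding G_def
    by (intro continuous_intros indefinite_integral_continuous_1 integrable_continuous_real
        continuous_on_compose2[OF contF]) auto
  then have "\<forall>w. \<exists>g :: real \<Rightarrow>\<^sub>C 'a. \<forall>t. g t = G w (clamp 0 T t)"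
    using continuous_on_cbox_bcontfunE[of 0 T] by (metis cbox_interval)
  then obtain \<Psi> :: "(real \<Rightarrow>\<^sub>C 'a) \<Rightarrow> (real \<Rightarrow>\<^sub>C 'a)" where \<Psi>: "\<And>w t. \<Psi> w t = G w (clamp 0 T t)"
    by metis
  have clamp: "clamp 0 T t \<in> {0..T}" "t \<in> {0..T} \<Longrightarrow> clamp 0 T t = t" for t
    using clamp_in_interval[of 0 T t] clamp_cancel_cbox[of t 0 T] T by (simp_all add: cbox_interval)
  have "dist (\<Psi> w1) (\<Psi> w2) \<le> 1/2 * dist w1 w2" for w1 w2
  proof (rule dist_bound)
    fix t
    let ?u = "clamp 0 T t"
    have "G w1 ?u - G w2 ?u = exp (- (2 * L * ?u)) *\<^sub>R integral {0..?u}
        (\<lambda>s. F (exp (2 * L * s) *\<^sub>R w1 s) - F (exp (2 * L * s) *\<^sub>R w2 s))"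
      by (simp add: G_def algebra_simps integral_diff integrable_continuous_real
          continuous_on_compose2[OF contF] continuous_intros)
    then show "dist (\<Psi> w1 t) (\<Psi> w2 t) \<le> 1/2 * dist w1 w2"
      using exp_weighted_lipschitz_integral_bound[OF lip L _, of ?u w1 w2 "dist w1 w2"] clamp(1)[of t]
      by (auto simp: \<Psi> dist_norm dist_bounded[of w1 _ w2, unfolded dist_norm] continuous_intros)
  qed
  then obtain w where w: "\<Psi> w = w"
    using banach_fix_type[of "1/2" \<Psi>] by auto
  define x where "x t = exp (2 * L * t) *\<^sub>R apply_bcontfun w t" for t
  have "x t = x0 + integral {0..t} (\<lambda>s. F (x s))" if t: "t \<in> {0..T}" for t
  proof -
    have "apply_bcontfun w t = G w t" using \<Psi>[of w t] w clamp(2)[OF t] by simp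
    then show ?thesis by (simp add: x_def G_def exp_minus)
  qed
  moreover have "continuous_on {0..T} x"
    unfolding x_def by (intro continuous_intros) simp
  ultimately show ?thesis by blast
qed

lemma lipschitz_ode_solution_exists:
  fixes F :: "'a::euclidean_space \<Rightarrow> 'a" and T :: real
  assumes lip: "L-lipschitz_on UNIV F" and T: "0 \<le> T"
  shows "\<exists>x. x 0 = x0 \<and> continuous_on {0..T} x \<and>
           (\<forall>t\<in>{0..T}. (x has_vector_derivative F (x t)) (at t within {0..T}))"
proof -
  have "(L + 1)-lipschitz_on UNIV F" using lip by (rule lipschitz_on_le) simp
  moreover have "0 < L + 1" using lipschitz_on_nonneg[OF lip] by simp
  ultimately obtain x where cont: "continuous_on {0..T} x"
    and x: "\<And>t. t \<in> {0..T} \<Longrightarrow> x t = x0 + integral {0..t} (\<lambda>s. F (x s))"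
    using lipschitz_integral_equation_solvable[OF _ _ T] by blast
  have contFx: "continuous_on {0..T} (\<lambda>s. F (x s))"
    by (rule continuous_on_compose2[OF lipschitz_on_continuous_on[OF lip] cont]) auto
  have "(x has_vector_derivative F (x t)) (at t within {0..T})" if t: "t \<in> {0..T}" for t
  proof (rule has_vector_derivative_transform[OF t x])
    show "((\<lambda>u. x0 + integral {0..u} (\<lambda>s. F (x s))) has_vector_derivative F (x t)) (at t within {0..T})"
      using integral_has_vector_derivative[OF contFx t] by (auto intro: derivative_eq_intros)
  qed
  moreover have "x 0 = x0" using x[of 0] T by simp
  ultimately show ?thesis using cont by blast
qed

lemma C1_on_continuous_on:
  assumes "C1_on g S"
  shows "continuous_on S g"
proof -
  obtain g' where "\<forall>x\<in>S. (g has_derivative blinfun_apply (g' x)) (at x)"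
    using assms unfolding C1_on_def by blast
  then show ?thesis
    by (intro has_derivative_continuous_on) (auto intro: has_derivative_at_withinI)
qed

lemma C1_on_differentiable: "C1_on g S \<Longrightarrow> x \<in> S \<Longrightarrow> g differentiable (at x)"
  unfolding C1_on_def differentiable_def by blast

lemma C1_on_lipschitz_closest_point_extension:
  fixes f :: "'a::euclidean_space \<Rightarrow> 'b::real_normed_vector"
  assumes f: "C1_on f D" and B: "compact B" "convex B" "B \<noteq> {}" "B \<subseteq> D"
  shows "\<exists>L. L-lipschitz_on UNIV (\<lambda>x. f (closest_point B x))"
proof -
  obtain f' where f'_cont: "continuous_on D f'"
    and f'_deriv: "\<And>x. x \<in> D \<Longrightarrow> (f has_derivative blinfun_apply (f' x)) (at x)"
    using f unfolding C1_on_def by blast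
  have "compact (f' ` B)"
    using compact_continuous_image[OF continuous_on_subset[OF f'_cont B(4)] B(1)] .
  then obtain M where M: "0 < M" "\<forall>y\<in>f' ` B. norm y \<le> M"
    using compact_imp_bounded bounded_pos by metis
  have f_lip: "norm (f x - f y) \<le> M * norm (x - y)" if "x \<in> B" "y \<in> B" for x y
    by (rule differentiable_bound[where f' = "\<lambda>x. blinfun_apply (f' x)", OF B(2) _ _ that])
      (use f'_deriv B(4) M in \<open>auto intro: has_derivative_at_withinI simp: norm_blinfun.rep_eq[symmetric]\<close>)
  have "closed B" using B(1) by (rule compact_imp_closed)
  have "M-lipschitz_on UNIV (\<lambda>x. f (closest_point B x))"
  proof (rule lipschitz_onI)
    fix x y :: 'a
    have "dist (f (closest_point B x)) (f (closest_point B y))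
        \<le> M * dist (closest_point B x) (closest_point B y)"
      using f_lip[OF closest_point_in_set closest_point_in_set] \<open>closed B\<close> B(3) by (simp add: dist_norm)
    also have "\<dots> \<le> M * dist x y"
      using closest_point_lipschitz[OF B(2) \<open>closed B\<close> B(3)] M(1) by simp
    finally show "dist (f (closest_point B x)) (f (closest_point B y)) \<le> M * dist x y" .
  qed (use M in simp)
  then show ?thesis ..
qed

lemma continuous_on_compact_pos_lower_bound:
  fixes P :: "'a::topological_space \<Rightarrow> real"
  assumes "compact K" "continuous_on K P" "\<And>y. y \<in> K \<Longrightarrow> 0 < P y"
  shows "\<exists>\<gamma>>0. \<forall>y\<in>K. \<gamma> \<le> P y"
proof (cases "K = {}")
  case False
  then obtain y0 where "y0 \<in> K" "\<forall>y\<in>K. P y0 \<le> P y"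
    using continuous_attains_inf[OF assms(1) _ assms(2)] by blast
  then show ?thesis using assms(3) by blast
qed (use zero_less_one in blast)

lemma first_time_reaching_level:
  fixes \<phi> :: "real \<Rightarrow> real"
  assumes cont: "continuous_on {0..T} \<phi>" and start: "\<phi> 0 \<le> c"
    and reach: "t \<in> {0..T}" "c \<le> \<phi> t"
  shows "\<exists>t'\<in>{0..T}. \<phi> t' = c \<and> (\<forall>s\<in>{0..t'}. \<phi> s \<le> c)"
proof -
  define S where "S = {0..T} \<inter> \<phi> -` {c..}"
  have "closed S"
    unfolding S_def by (rule continuous_closed_preimage[OF cont closed_atLeastAtMost closed_atLeast])
  moreover have "S \<noteq> {}" using reach by (auto simp: S_def)
  moreover have bdd: "bdd_below S" by (rule bdd_belowI[of _ 0]) (auto simp: S_def)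
  ultimately have "Inf S \<in> S" by (intro closed_contains_Inf)
  define t1 where "t1 = Inf S"
  have t1: "0 \<le> t1" "t1 \<le> T" "c \<le> \<phi> t1" using \<open>Inf S \<in> S\<close> by (auto simp: S_def t1_def)
  have before_t1: "\<phi> s < c" if "0 \<le> s" "s < t1" for s
  proof -
    have "s \<notin> S" using cInf_lower[OF _ bdd, of s] that by (auto simp: t1_def)
    then show ?thesis using that t1 by (auto simp: S_def)
  qed
  have "continuous_on {0..t1} \<phi>" by (rule continuous_on_subset[OF cont]) (use t1 in auto)
  then obtain t' where t': "0 \<le> t'" "t' \<le> t1" "\<phi> t' = c"
    using IVT'[of \<phi> 0 c t1] start t1 by blast
  have "\<phi> s \<le> c" if s: "s \<in> {0..t'}" for s
  proof (cases "s < t1")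
    case False
    then have "s = t'" using s t' by auto
    then show ?thesis using t' by simp
  qed (use before_t1[of s] s in auto)
  then show ?thesis using t' t1 by auto
qed

lemma has_real_derivative_stays_above:
  fixes g g' :: "real \<Rightarrow> real"
  assumes deriv: "\<And>t. t \<in> {0..T} \<Longrightarrow> (g has_real_derivative g' t) (at t within {0..T})"
    and start: "a \<le> g 0" and push: "\<And>t. t \<in> {0..T} \<Longrightarrow> a \<le> g t \<Longrightarrow> 0 < g' t"
    and t: "t \<in> {0..T}"
  shows "a \<le> g t"
proof (rule ccontr)
  assume "\<not> a \<le> g t"
  define C where "C = {0..t} \<inter> g -` {a..}"
  have "continuous_on {0..t} g"
    using DERIV_continuous_on[OF deriv] continuous_on_subset t by fastforce
  then have "closed C"
    unfolding C_def by (rule continuous_closed_preimage[OF _ closed_atLeastAtMost closed_atLeast])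
  moreover have "C \<noteq> {}" using start t by (auto simp: C_def)
  moreover have bdd: "bdd_above C" by (rule bdd_aboveI[of _ t]) (auto simp: C_def)
  ultimately have "Sup C \<in> C" by (intro closed_contains_Sup)
  define s where "s = Sup C"
  have s: "0 \<le> s" "s < t" "a \<le> g s"
    using \<open>Sup C \<in> C\<close> \<open>\<not> a \<le> g t\<close> by (auto simp: C_def s_def intro: order.not_eq_order_implies_strict)
  then have "s \<in> {0..T}" using t by auto
  then obtain d where d: "0 < d" "\<forall>h>0. s + h \<in> {0..T} \<longrightarrow> h < d \<longrightarrow> g s < g (s + h)"
    using has_real_derivative_pos_inc_right[OF deriv push] s by blast
  define h where "h = min (d/2) (t - s)"
  have h: "0 < h" "h < d" "s + h \<le> t" using d s by (auto simp: h_def)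
  then have "g s < g (s + h)" using d s t by auto
  then have "s + h \<in> C" using s h by (auto simp: C_def)
  then have "s + h \<le> s" unfolding s_def by (rule cSup_upper[OF _ bdd])
  then show False using h by simp
qed

lemma has_real_derivative_linear_growth:
  fixes g g' :: "real \<Rightarrow> real"
  assumes deriv: "\<And>t. t \<in> {0..T} \<Longrightarrow> (g has_real_derivative g' t) (at t within {0..T})"
    and rate: "\<And>t. t \<in> {0..T} \<Longrightarrow> \<gamma> \<le> g' t" and T: "0 \<le> T"
  shows "g 0 + \<gamma> * T \<le> g T"
proof -
  have "g 0 - \<gamma> * 0 \<le> g T - \<gamma> * T"
  proof (rule DERIV_nonneg_imp_increasing_open[OF T])
    show "continuous_on {0..T} (\<lambda>t. g t - \<gamma> * t)"
      by (intro continuous_intros DERIV_continuous_on[OF deriv])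
    fix t :: real assume t: "0 < t" "t < T"
    then have "((\<lambda>t. g t - \<gamma> * t) has_real_derivative g' t - \<gamma>) (at t)"
      using deriv[of t] by (auto intro!: derivative_eq_intros simp: at_within_Icc_at)
    then show "\<exists>y. ((\<lambda>t. g t - \<gamma> * t) has_real_derivative y) (at t) \<and> 0 \<le> y"
      using rate[of t] t by auto
  qed
  then show ?thesis by simp
qed

lemma is_solution_mono: "is_solution f B x T \<Longrightarrow> B \<subseteq> D \<Longrightarrow> is_solution f D x T"
  unfolding is_solution_def by blast

lemma is_solution_on_subinterval:
  assumes deriv: "\<And>t. t \<in> {0..T} \<Longrightarrow> (x has_vector_derivative F (x t)) (at t within {0..T})"
    and S: "0 \<le> S" "S \<le> T" and stays: "\<And>t. t \<in> {0..S} \<Longrightarrow> x t \<in> B"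
    and agree: "\<And>y. y \<in> B \<Longrightarrow> F y = f y"
  shows "is_solution f B x S"
  unfolding is_solution_def
proof (intro conjI ballI)
  fix t assume t: "t \<in> {0..S}"
  show "x t \<in> B" using stays[OF t] .
  have "(x has_vector_derivative F (x t)) (at t within {0..S})"
    by (rule has_vector_derivative_within_subset[OF deriv]) (use t S in auto)
  then show "(x has_vector_derivative f (x t)) (at t within {0..S})"
    using agree[OF stays[OF t]] by simp
qed (rule S(1))

lemma is_solution_superlevel_growth:
  assumes sol: "is_solution f B x T"
    and deriv: "\<And>y. y \<in> B \<Longrightarrow> (\<rho> has_derivative \<rho>' y) (at y)"
    and \<gamma>: "0 < \<gamma>" "\<And>y. y \<in> B \<Longrightarrow> \<rho> (x 0) \<le> \<rho> y \<Longrightarrow> \<gamma> \<le> \<rho>' y (f y)"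
  shows "\<rho> (x 0) + \<gamma> * T \<le> \<rho> (x T)"
proof -
  have T: "0 \<le> T" and x: "\<And>t. t \<in> {0..T} \<Longrightarrow> x t \<in> B"
    and x': "\<And>t. t \<in> {0..T} \<Longrightarrow> (x has_vector_derivative f (x t)) (at t within {0..T})"
    using sol unfolding is_solution_def by auto
  have g_deriv: "((\<lambda>t. \<rho> (x t)) has_real_derivative \<rho>' (x t) (f (x t))) (at t within {0..T})"
    if t: "t \<in> {0..T}" for t
    using vector_derivative_diff_chain_within[OF x'[OF t] has_derivative_at_withinI[OF deriv[OF x[OF t]]]]
    by (simp add: o_def has_real_derivative_iff_has_vector_derivative)
  have "\<rho> (x 0) \<le> \<rho> (x t)" if "t \<in> {0..T}" for t
    by (rule has_real_derivative_stays_above[OF g_deriv _ _ that])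
      (use \<gamma> x in \<open>auto intro: less_le_trans\<close>)
  then have "\<gamma> \<le> \<rho>' (x t) (f (x t))" if "t \<in> {0..T}" for t
    using \<gamma>(2) x that by blast
  then show ?thesis
    using has_real_derivative_linear_growth[OF g_deriv _ T] by blast
qed

lemma lie_derivative_superlevel_lower_bound:
  fixes f :: "'a::real_normed_vector \<Rightarrow> 'a" and \<rho> :: "'a \<Rightarrow> real"
    and \<rho>' :: "'a \<Rightarrow> 'a \<Rightarrow>\<^sub>L real"
  assumes "compact B" and "continuous_on B f" "continuous_on B \<rho>" "continuous_on B \<rho>'"
    and lie_pos: "\<And>y. y \<in> B \<Longrightarrow> 0 < \<rho> y \<Longrightarrow> 0 < \<rho>' y (f y)" and "0 < a"
  shows "\<exists>\<gamma>>0. \<forall>y\<in>B. a \<le> \<rho> y \<longrightarrow> \<gamma> \<le> \<rho>' y (f y)"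
proof -
  define K where "K = B \<inter> \<rho> -` {a..}"
  have "K \<subseteq> B" by (auto simp: K_def)
  have "compact K"
    unfolding K_def by (rule closedin_compact[OF assms(1) continuous_closedin_preimage[OF assms(3) closed_atLeast]])
  moreover have "continuous_on K (\<lambda>y. \<rho>' y (f y))"
    using continuous_on_subset[OF assms(4) \<open>K \<subseteq> B\<close>] continuous_on_subset[OF assms(2) \<open>K \<subseteq> B\<close>]
    by (rule blinfun.continuous_on)
  moreover have "0 < \<rho>' y (f y)" if "y \<in> K" for y
    using that lie_pos \<open>0 < a\<close> by (simp add: K_def)
  ultimately obtain \<gamma> where "0 < \<gamma>" "\<forall>y\<in>K. \<gamma> \<le> \<rho>' y (f y)"
    using continuous_on_compact_pos_lower_bound by blast
  then show ?thesis by (auto simp: K_def)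
qed

lemma chetaev_solution_reaches_sphere:
  fixes f :: "real^'n \<Rightarrow> real^'n" and \<rho> :: "real^'n \<Rightarrow> real"
  assumes f_C1: "C1_on f D" and rho_C1: "C1_on \<rho> D" and B_sub: "cball 0 r \<subseteq> D"
    and x0: "x0 \<in> cball 0 r" "0 < \<rho> x0"
    and lie_pos: "\<And>y. y \<in> cball 0 r \<Longrightarrow> 0 < \<rho> y \<Longrightarrow> 0 < frechet_derivative \<rho> (at y) (f y)"
  shows "\<exists>x T. is_solution f D x T \<and> x 0 = x0 \<and> norm (x T) = r"
proof -
  define B where "B = cball (0::real^'n) r"
  have "0 \<le> r" using x0(1) by (auto intro: order_trans[OF norm_ge_zero])
  then have B: "compact B" "convex B" "B \<noteq> {}" "B \<subseteq> D"
    using B_sub by (auto simp: B_def)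
  obtain \<rho>' where \<rho>'_cont: "continuous_on D \<rho>'"
    and \<rho>'_deriv: "\<And>y. y \<in> D \<Longrightarrow> (\<rho> has_derivative blinfun_apply (\<rho>' y)) (at y)"
    using rho_C1 unfolding C1_on_def by blast
  have \<rho>_cont: "continuous_on B \<rho>"
    using continuous_on_subset[OF C1_on_continuous_on[OF rho_C1] B(4)] .
  have "0 < \<rho>' y (f y)" if "y \<in> B" "0 < \<rho> y" for y
    using lie_pos[of y] that frechet_derivative_at[OF \<rho>'_deriv] B(4) by (auto simp: B_def)
  then obtain \<gamma> where \<gamma>: "0 < \<gamma>" "\<forall>y\<in>B. \<rho> x0 \<le> \<rho> y \<longrightarrow> \<gamma> \<le> \<rho>' y (f y)"
    using lie_derivative_superlevel_lower_bound[OF B(1) _ \<rho>_cont _ _ x0(2)]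
      continuous_on_subset[OF C1_on_continuous_on[OF f_C1] B(4)]
      continuous_on_subset[OF \<rho>'_cont B(4)] by blast
  obtain M where M: "\<forall>y\<in>B. \<rho> y \<le> M"
    using continuous_attains_sup[OF B(1,3) \<rho>_cont] by blast
  have "\<rho> x0 \<le> M" using M x0(1) by (simp add: B_def)
  define T where "T = (M - \<rho> x0) / \<gamma> + 1"
  have T: "0 \<le> T" "M < \<rho> x0 + \<gamma> * T"
    using \<open>\<rho> x0 \<le> M\<close> \<gamma>(1) by (simp_all add: T_def field_simps)
  obtain L where "L-lipschitz_on UNIV (\<lambda>y. f (closest_point B y))"
    using C1_on_lipschitz_closest_point_extension[OF f_C1 B] by blast
  then obtain x where x: "x 0 = x0" "continuous_on {0..T} x"
    "\<And>t. t \<in> {0..T} \<Longrightarrow> (x has_vector_derivative f (closest_point B (x t))) (at t within {0..T})"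
    using lipschitz_ode_solution_exists[OF _ T(1)] by blast
  have agree: "f (closest_point B y) = f y" if "y \<in> B" for y
    using closest_point_self[OF that] by simp
  have "\<exists>t\<in>{0..T}. r \<le> norm (x t)"
  proof (rule ccontr)
    assume "\<not> ?thesis"
    then have stays: "x t \<in> B" if "t \<in> {0..T}" for t
      using that unfolding B_def mem_cball_0 by (meson le_cases)
    then have "is_solution f B x T"
      by (intro is_solution_on_subinterval[OF x(3) T(1) order_refl _ agree])
    then have "\<rho> (x 0) + \<gamma> * T \<le> \<rho> (x T)"
    proof (rule is_solution_superlevel_growth[of f B x T \<rho> "\<lambda>y. blinfun_apply (\<rho>' y)" \<gamma>])
      show "(\<rho> has_derivative blinfun_apply (\<rho>' y)) (at y)" if "y \<in> B" for y
        using that B(4) by (intro \<rho>'_deriv) blast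
      show "\<gamma> \<le> \<rho>' y (f y)" if "y \<in> B" "\<rho> (x 0) \<le> \<rho> y" for y
        using that \<gamma>(2) x(1) by simp
    qed (use \<gamma>(1) in simp)
    moreover have "\<rho> (x T) \<le> M" using M stays T(1) by simp
    ultimately show False using T(2) x(1) by simp
  qed
  then obtain t0 where t0: "t0 \<in> {0..T}" "r \<le> norm (x t0)" by blast
  have norm_cont: "continuous_on {0..T} (\<lambda>t. norm (x t))" using x(2) by (intro continuous_intros)
  have "norm (x 0) \<le> r" using x(1) x0(1) by simp
  then obtain t where t: "t \<in> {0..T}" "norm (x t) = r" "\<forall>s\<in>{0..t}. norm (x s) \<le> r"
    using first_time_reaching_level[OF norm_cont _ t0] by blast
  have "is_solution f B x t"
    by (rule is_solution_on_subinterval[OF x(3) _ _ _ agree]) (use t in \<open>auto simp: B_def\<close>)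
  with is_solution_mono B(4) x(1) t(2) show ?thesis by blast
qed

lemma chetaev_instability:
  fixes f :: "real^'n \<Rightarrow> real^'n" and \<rho> :: "real^'n \<Rightarrow> real"
  assumes f_C1: "C1_on f D" and rho_C1: "C1_on \<rho> D" and r: "0 < r" and B_sub: "cball 0 r \<subseteq> D"
    and rho_pos_near: "\<forall>\<epsilon>>0. \<exists>x0\<in>D. norm x0 < \<epsilon> \<and> \<rho> x0 > 0"
    and lie_pos: "\<And>y. y \<in> cball 0 r \<Longrightarrow> 0 < \<rho> y \<Longrightarrow> 0 < frechet_derivative \<rho> (at y) (f y)"
  shows "lyapunov_unstable_origin f D"
  unfolding lyapunov_unstable_origin_def lyapunov_stable_origin_def
proof
  assume "\<forall>\<epsilon>>0. \<exists>\<delta>>0. \<forall>x T. is_solution f D x T \<and> norm (x 0) < \<delta> \<longrightarrow>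
    (\<forall>t\<in>{0..T}. norm (x t) < \<epsilon>)"
  then obtain \<delta> where \<delta>: "0 < \<delta>"
    and stable: "\<And>x T. is_solution f D x T \<Longrightarrow> norm (x 0) < \<delta> \<Longrightarrow> \<forall>t\<in>{0..T}. norm (x t) < r"
    using r by blast
  obtain x0 where x0: "norm x0 < min \<delta> r" "0 < \<rho> x0"
    using rho_pos_near \<delta> r by (metis min_less_iff_conj)
  then have "x0 \<in> cball 0 r" by simp
  then obtain x T where sol: "is_solution f D x T" and "x 0 = x0" "norm (x T) = r"
    using chetaev_solution_reaches_sphere[OF f_C1 rho_C1 B_sub _ x0(2) lie_pos] by blast
  moreover have "T \<in> {0..T}" using sol by (simp add: is_solution_def)
  ultimately show False using stable[OF sol] x0(1) by auto
qed

lemma linear_sum_axis: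
  fixes l :: "real^'n \<Rightarrow> real"
  assumes "linear l"
  shows "(\<Sum>i\<in>UNIV. l (axis i 1) * v $ i) = l v"
proof -
  have "l v = l (\<Sum>i\<in>UNIV. v $ i *\<^sub>R axis i 1)"
    using basis_expansion[of v] by (simp add: scalar_mult_eq_scaleR)
  also have "\<dots> = (\<Sum>i\<in>UNIV. v $ i * l (axis i 1))"
    using assms by (simp add: linear_sum linear_scale o_def)
  finally show ?thesis by (simp add: mult.commute)
qed

lemma divergence_has_derivative:
  assumes "(f has_derivative f') (at x)"
  shows "divergence f x = (\<Sum>i\<in>UNIV. f' (axis i 1) $ i)"
  using frechet_derivative_at[OF assms] by (simp add: divergence_def)

lemma divergence_scaleR:
  fixes g :: "real^'n \<Rightarrow> real" and f :: "real^'n \<Rightarrow> real^'n"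
  assumes g: "(g has_derivative g') (at x)" and f: "f differentiable (at x)"
  shows "divergence (\<lambda>y. g y *\<^sub>R f y) x = g x * divergence f x + g' (f x)"
proof -
  obtain f' where f': "(f has_derivative f') (at x)" using f by (auto simp: differentiable_def)
  have "((\<lambda>y. g y *\<^sub>R f y) has_derivative (\<lambda>h. g x *\<^sub>R f' h + g' h *\<^sub>R f x)) (at x)"
    using has_derivative_scaleR[OF g f'] by simp
  then have "divergence (\<lambda>y. g y *\<^sub>R f y) x
      = (\<Sum>i\<in>UNIV. g x * f' (axis i 1) $ i + g' (axis i 1) * f x $ i)"
    by (simp add: divergence_has_derivative)
  also have "\<dots> = g x * (\<Sum>i\<in>UNIV. f' (axis i 1) $ i) + (\<Sum>i\<in>UNIV. g' (axis i 1) * f x $ i)"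
    by (simp add: sum.distrib sum_distrib_left)
  also have "\<dots> = g x * divergence f x + g' (f x)"
    by (simp only: divergence_has_derivative[OF f'] linear_sum_axis[OF has_derivative_linear[OF g]])
  finally show ?thesis .
qed

lemma divergence_inverse_scaleR:
  fixes g :: "real^'n \<Rightarrow> real" and f :: "real^'n \<Rightarrow> real^'n"
  assumes g: "(g has_derivative g') (at x)" and f: "f differentiable (at x)" and "g x \<noteq> 0"
  shows "divergence (\<lambda>y. inverse (g y) *\<^sub>R f y) x = inverse (g x) * divergence f x - g' (f x) / (g x)\<^sup>2"
proof -
  have inv: "((\<lambda>y. inverse (g y)) has_derivative (\<lambda>h. - (inverse (g x) * g' h * inverse (g x)))) (at x)"
    using Deriv.has_derivative_inverse[OF \<open>g x \<noteq> 0\<close> g] .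
  have "divergence (\<lambda>y. inverse (g y) *\<^sub>R f y) x
      = inverse (g x) * divergence f x + - (inverse (g x) * g' (f x) * inverse (g x))"
    by (rule divergence_scaleR[OF inv f])
  also have "\<dots> = inverse (g x) * divergence f x - g' (f x) / (g x)\<^sup>2"
    by (simp add: power2_eq_square divide_inverse mult_ac)
  finally show ?thesis .
qed

lemma divergence_conditions_imp_pos:
  fixes p d P A1 A2 :: real
  assumes p: "0 < p" and A1: "A1 = p * d + P" and A2: "A2 = inverse p * d - P / p\<^sup>2"
    and cond: "A1 > p * d \<or> (A2 < 0 \<and> d \<ge> 0)
      \<or> (\<exists>\<beta>::real. ((\<beta> > 1 \<and> d \<ge> 0) \<or> \<beta> = 1) \<and> A1 > \<beta> * p\<^sup>2 * A2)
      \<or> (A1 > 0 \<and> A2 < 0)"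
  shows "0 < P"
proof -
  have scaled: "p\<^sup>2 * A2 = p * d - P"
    using p by (simp add: A2 power2_eq_square field_simps)
  have A2_neg: "A2 < 0 \<longleftrightarrow> p * d - P < 0"
  proof -
    have "A2 < 0 \<longleftrightarrow> p\<^sup>2 * A2 < 0" using p by (simp add: mult_less_0_iff)
    then show ?thesis using scaled by simp
  qed
  have case1: "0 < P" if "A1 > p * d" using that A1 by simp
  have case2: "0 < P" if "A2 < 0" "d \<ge> 0"
    using that A2_neg mult_nonneg_nonneg[of p d] p by linarith
  have case3: "0 < P" if \<beta>: "(\<beta> > 1 \<and> d \<ge> 0) \<or> \<beta> = 1" and "A1 > \<beta> * p\<^sup>2 * A2" for \<beta> :: real
  proof -
    have "A1 > \<beta> * (p * d - P)" using that(2) scaled by (simp add: mult.assoc)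
    then have "(\<beta> - 1) * (p * d) < (1 + \<beta>) * P" using A1 by (simp add: algebra_simps)
    moreover have "0 \<le> (\<beta> - 1) * (p * d)" if "\<beta> > 1" "d \<ge> 0" using that p by simp
    ultimately have "0 < (1 + \<beta>) * P" using \<beta> by auto
    then show ?thesis using \<beta> by (auto simp: zero_less_mult_iff)
  qed
  have case4: "0 < P" if "A1 > 0" "A2 < 0" using that A1 A2_neg by linarith
  show ?thesis using cond case1 case2 case3 case4 by blast
qed

theorem theorem2p5:
  fixes f :: "real^'n \<Rightarrow> real^'n" and \<rho> :: "real^'n \<Rightarrow> real"
    and D :: "(real^'n) set" and r :: real
  assumes D_open: "open D" and D_conn: "connected D" and D0: "0 \<in> D"
    and f_C1: "C1_on f D" and f0: "f 0 = 0"
    and rho_C1: "C1_on \<rho> D" and rho0: "\<rho> 0 = 0"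
    and rho_pos_near: "\<forall>\<epsilon>>0. \<exists>x0\<in>D. norm x0 < \<epsilon> \<and> \<rho> x0 > 0"
    and r_pos: "r > 0" and B_sub: "cball 0 r \<subseteq> D"
    and conds: "\<forall>x\<in>{x \<in> cball 0 r. \<rho> x > 0}.
        divergence (\<lambda>y. \<rho> y *\<^sub>R f y) x > \<rho> x * divergence f x
      \<or> (divergence (\<lambda>y. inverse (\<rho> y) *\<^sub>R f y) x < 0 \<and> divergence f x \<ge> 0)
      \<or> (\<exists>\<beta>::real. ((\<beta> > 1 \<and> divergence f x \<ge> 0) \<or> \<beta> = 1) \<and>
           divergence (\<lambda>y. \<rho> y *\<^sub>R f y) x
             > \<beta> * (\<rho> x)\<^sup>2 * divergence (\<lambda>y. inverse (\<rho> y) *\<^sub>R f y) x)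
      \<or> (divergence (\<lambda>y. \<rho> y *\<^sub>R f y) x > 0 \<and> divergence (\<lambda>y. inverse (\<rho> y) *\<^sub>R f y) x < 0)"
  shows "lyapunov_unstable_origin f D"
proof (rule chetaev_instability[OF f_C1 rho_C1 r_pos B_sub rho_pos_near])
  fix x :: "real^'n"
  assume x: "x \<in> cball 0 r" "0 < \<rho> x"
  then have "x \<in> D" using B_sub by blast
  then have f_diff: "f differentiable (at x)"
    and rho_deriv: "(\<rho> has_derivative frechet_derivative \<rho> (at x)) (at x)"
    using f_C1 rho_C1 by (auto simp: C1_on_differentiable frechet_derivative_works[symmetric])
  have "\<rho> x \<noteq> 0" using x by simp
  have "x \<in> {x \<in> cball 0 r. \<rho> x > 0}" using x by simp
  then show "0 < frechet_derivative \<rho> (at x) (f x)"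
    by (rule divergence_conditions_imp_pos[OF x(2) divergence_scaleR[OF rho_deriv f_diff]
        divergence_inverse_scaleR[OF rho_deriv f_diff \<open>\<rho> x \<noteq> 0\<close>] conds[rule_format]])
qed

end
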